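(* Let $\Lambda$ be a row-finite $2$-graph with no sources. Suppose that for every vertex $v\in\Lambda^0$ there is a vertex $u\in\Lambda^0$ with $v\Lambda u\neq\emptyset$ at which there is an aperiodic quartet (that is, an $(a,b)$-aperiodic quartet for some positive integers $a,b$). Then $\Lambda$ is aperiodic.
   Context: A $k$-graph is a countable category $\Lambda$ with a functor $d:\Lambda\to\mathbb{N}^k$ satisfying the factorization property: whenever $d(\lambda)=m+n$ there are unique $\mu,\nu$ with $\lambda=\mu\nu$, $d(\mu)=m$, $d(\nu)=n$. $\Lambda^n=d^{-1}(n)$, $\Lambda^0$ the vertices, $r,s$ range and source, $v\Lambda=\{\lambda:r(\lambda)=v\}$, $v\Lambda^n w=\{\lambda: r(\lambda)=v,d(\lambda)=n,s(\lambda)=w\}$, $v\Lambda w$ the union over $n$. Row-finite: each $v\Lambda^n$ finite; no sources: $v\Lambda^{e_i}\ne\emptyset$ for all $v,i$. For $0\le m\le n\le d(\lambda)$, $\lambda(m,n)$ is the unique path with $\lambda=\lambda'\lambda(m,n)\lambda''$, $d(\lambda')=m$, $d(\lambda(m,n))=n-m$. $\Lambda$ has no local periodicity at $v$ if for each $m\neq n\in\mathbb{N}^k$ there is $\lambda\in v\Lambda$ with $d(\lambda)\ge m\vee n$ and $\lambda(m,m+d(\lambda)-(m\vee n))\neq\lambda(n,n+d(\lambda)-(m\vee n))$; $\Lambda$ is aperiodic if it has no local periodicity at every vertex. For positive integers $a,b$, an $(a,b)$-aperiodic quartet at $u$ is $(\alpha_1,\alpha_2,\beta_1,\beta_2)$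 with $\alpha_1\neq\alpha_2$ in $u\Lambda^{ae_1}u$, $\beta_1\neq\beta_2$ in $u\Lambda^{be_2}u$, and $\beta_2\alpha_1=\alpha_1\beta_2$, $\beta_2\alpha_2=\alpha_2\beta_2$, $\beta_1\alpha_1=\alpha_2\beta_1$, $\beta_1\alpha_2=\alpha_1\beta_1$. *)

theory Defs
  imports Main "HOL-Library.Countable_Set"
begin

type_synonym deg = "nat \<times> nat"

definition dadd :: "deg \<Rightarrow> deg \<Rightarrow> deg" where
  "dadd m n = (fst m + fst n, snd m + snd n)"

definition dsub :: "deg \<Rightarrow> deg \<Rightarrow> deg" where
  "dsub m n = (fst m - fst n, snd m - snd n)"

definition dle :: "deg \<Rightarrow> deg \<Rightarrow> bool" where
  "dle m n \<longleftrightarrow> fst m \<le> fst n \<and> snd m \<le> snd n"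

definition djoin :: "deg \<Rightarrow> deg \<Rightarrow> deg" where
  "djoin m n = (max (fst m) (fst n), max (snd m) (snd n))"

definition e1 :: deg where "e1 = (1, 0)"
definition e2 :: deg where "e2 = (0, 1)"

text \<open>A 2-graph: a countable small category with object set V, morphism set P,
  range/source maps r s, composition cmp (cmp f g = "f g", defined when s f = r g),
  identities idt, and a degree functor d into N^2 with the factorization property.\<close>

definition two_graph ::
  "'v set \<Rightarrow> 'a set \<Rightarrow> ('a \<Rightarrow> 'v) \<Rightarrow> ('a \<Rightarrow> 'v) \<Rightarrow> ('a \<Rightarrow> 'a \<Rightarrow> 'a)
   \<Rightarrow> ('v \<Rightarrow> 'a) \<Rightarrow> ('a \<Rightarrow> deg) \<Rightarrow> bool" where
  "two_graph V P r s cmp idt d \<longleftrightarrow>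
     countable V \<and> countable P \<and>
     (\<forall>f\<in>P. r f \<in> V \<and> s f \<in> V) \<and>
     (\<forall>v\<in>V. idt v \<in> P \<and> r (idt v) = v \<and> s (idt v) = v) \<and>
     (\<forall>f\<in>P. \<forall>g\<in>P. s f = r g \<longrightarrow>
        cmp f g \<in> P \<and> r (cmp f g) = r f \<and> s (cmp f g) = s g) \<and>
     (\<forall>f\<in>P. \<forall>g\<in>P. \<forall>h\<in>P. s f = r g \<longrightarrow> s g = r h \<longrightarrow>
        cmp (cmp f g) h = cmp f (cmp g h)) \<and>
     (\<forall>f\<in>P. cmp (idt (r f)) f = f \<and> cmp f (idt (s f)) = f) \<and>
     (\<forall>v\<in>V. d (idt v) = (0, 0)) \<and>
     (\<forall>f\<in>P. \<forall>g\<in>P. s f = r g \<longrightarrow> d (cmp f g) = dadd (d f) (d g)) \<and>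
     (\<forall>f\<in>P. \<forall>m n. d f = dadd m n \<longrightarrow>
        (\<exists>!p. fst p \<in> P \<and> snd p \<in> P \<and> s (fst p) = r (snd p) \<and>
              f = cmp (fst p) (snd p) \<and> d (fst p) = m \<and> d (snd p) = n))"

definition row_finite ::
  "'v set \<Rightarrow> 'a set \<Rightarrow> ('a \<Rightarrow> 'v) \<Rightarrow> ('a \<Rightarrow> deg) \<Rightarrow> bool" where
  "row_finite V P r d \<longleftrightarrow> (\<forall>v\<in>V. \<forall>n. finite {f\<in>P. r f = v \<and> d f = n})"

definition no_sources ::
  "'v set \<Rightarrow> 'a set \<Rightarrow> ('a \<Rightarrow> 'v) \<Rightarrow> ('a \<Rightarrow> deg) \<Rightarrow> bool" where
  "no_sources V P r d \<longleftrightarrow>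
     (\<forall>v\<in>V. {f\<in>P. r f = v \<and> d f = e1} \<noteq> {} \<and> {f\<in>P. r f = v \<and> d f = e2} \<noteq> {})"

definition seg ::
  "'a set \<Rightarrow> ('a \<Rightarrow> 'v) \<Rightarrow> ('a \<Rightarrow> 'v) \<Rightarrow> ('a \<Rightarrow> 'a \<Rightarrow> 'a) \<Rightarrow> ('a \<Rightarrow> deg)
   \<Rightarrow> 'a \<Rightarrow> deg \<Rightarrow> deg \<Rightarrow> 'a" where
  "seg P r s cmp d f m n =
     (THE g. g \<in> P \<and> (\<exists>f1\<in>P. \<exists>f2\<in>P. s f1 = r g \<and> s g = r f2 \<and>
        f = cmp (cmp f1 g) f2 \<and> d f1 = m \<and> d g = dsub n m))"

definition no_local_periodicity_at ::
  "'a set \<Rightarrow> ('a \<Rightarrow> 'v) \<Rightarrow> ('a \<Rightarrow> 'v) \<Rightarrow> ('a \<Rightarrow> 'a \<Rightarrow> 'a) \<Rightarrow> ('a \<Rightarrow> deg) \<Rightarrow> 'v \<Rightarrow> bool" where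
  "no_local_periodicity_at P r s cmp d v \<longleftrightarrow>
     (\<forall>m n. m \<noteq> n \<longrightarrow>
        (\<exists>f\<in>P. r f = v \<and> dle (djoin m n) (d f) \<and>
           seg P r s cmp d f m (dadd m (dsub (d f) (djoin m n)))
           \<noteq> seg P r s cmp d f n (dadd n (dsub (d f) (djoin m n)))))"

definition aperiodic ::
  "'v set \<Rightarrow> 'a set \<Rightarrow> ('a \<Rightarrow> 'v) \<Rightarrow> ('a \<Rightarrow> 'v) \<Rightarrow> ('a \<Rightarrow> 'a \<Rightarrow> 'a) \<Rightarrow> ('a \<Rightarrow> deg) \<Rightarrow> bool" where
  "aperiodic V P r s cmp d \<longleftrightarrow> (\<forall>v\<in>V. no_local_periodicity_at P r s cmp d v)"

definition paths_between ::
  "'a set \<Rightarrow> ('a \<Rightarrow> 'v) \<Rightarrow> ('a \<Rightarrow> 'v) \<Rightarrow> ('a \<Rightarrow> deg) \<Rightarrow> 'v \<Rightarrow> deg \<Rightarrow> 'v \<Rightarrow> 'a set" where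
  "paths_between P r s d u n w = {f\<in>P. r f = u \<and> d f = n \<and> s f = w}"

definition aperiodic_quartet ::
  "'a set \<Rightarrow> ('a \<Rightarrow> 'v) \<Rightarrow> ('a \<Rightarrow> 'v) \<Rightarrow> ('a \<Rightarrow> 'a \<Rightarrow> 'a) \<Rightarrow> ('a \<Rightarrow> deg)
   \<Rightarrow> nat \<Rightarrow> nat \<Rightarrow> 'v \<Rightarrow> 'a \<Rightarrow> 'a \<Rightarrow> 'a \<Rightarrow> 'a \<Rightarrow> bool" where
  "aperiodic_quartet P r s cmp d a b u \<alpha>1 \<alpha>2 \<beta>1 \<beta>2 \<longleftrightarrow>
     0 < a \<and> 0 < b \<and>
     \<alpha>1 \<in> paths_between P r s d u (a, 0) u \<and> \<alpha>2 \<in> paths_between P r s d u (a, 0) u \<and>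
     \<alpha>1 \<noteq> \<alpha>2 \<and>
     \<beta>1 \<in> paths_between P r s d u (0, b) u \<and> \<beta>2 \<in> paths_between P r s d u (0, b) u \<and>
     \<beta>1 \<noteq> \<beta>2 \<and>
     cmp \<beta>2 \<alpha>1 = cmp \<alpha>1 \<beta>2 \<and> cmp \<beta>2 \<alpha>2 = cmp \<alpha>2 \<beta>2 \<and>
     cmp \<beta>1 \<alpha>1 = cmp \<alpha>2 \<beta>1 \<and> cmp \<beta>1 \<alpha>2 = cmp \<alpha>1 \<beta>1"

definition has_aperiodic_quartet_at ::
  "'a set \<Rightarrow> ('a \<Rightarrow> 'v) \<Rightarrow> ('a \<Rightarrow> 'v) \<Rightarrow> ('a \<Rightarrow> 'a \<Rightarrow> 'a) \<Rightarrow> ('a \<Rightarrow> deg) \<Rightarrow> 'v \<Rightarrow> bool" where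
  "has_aperiodic_quartet_at P r s cmp d u \<longleftrightarrow>
     (\<exists>a b \<alpha>1 \<alpha>2 \<beta>1 \<beta>2. aperiodic_quartet P r s cmp d a b u \<alpha>1 \<alpha>2 \<beta>1 \<beta>2)"

end

theory Submission
  imports Defs
begin

text \<open>
  At a vertex \<open>u\<close> carrying an \<open>(a,b)\<close>-aperiodic quartet, \<open>\<beta>\<^sub>2\<close> commutes with
  both \<open>\<alpha>\<^sub>i\<close> while \<open>\<beta>\<^sub>1\<close> interchanges them. Reading a word in these loops cell by
  cell of the grid \<open>a\<nat> \<times> b\<nat>\<close>, one can therefore build, for any two distinct cells, an
  arbitrarily long loop at \<open>u\<close> whose degree-\<open>(a,0)\<close> segments at those cells are
  \<open>\<alpha>\<^sub>1\<close> and \<open>\<alpha>\<^sub>2\<close>. If a path \<open>f\<close> from \<open>v\<close> satisfied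
  \<open>f(m, m+t) = f(n, n+t)\<close>, iterating this shift would make the segments of \<open>f\<close> at
  \<open>k m + p\<close> and \<open>k n + p\<close> agree; for \<open>k = ab\<close> and \<open>f = l \<mu>\<close> with \<open>l\<close> a path
  from \<open>v\<close> to \<open>u\<close> and \<open>\<mu>\<close> a loop separating the cells \<open>ab m\<close> and \<open>ab n\<close>, this is
  impossible.
\<close>

lemma dadd_Pair [simp]: "dadd (a, b) (c, e) = (a + c, b + e)"
  by (simp add: dadd_def)

definition dscale :: "nat \<Rightarrow> deg \<Rightarrow> deg" where
  "dscale k m = (k * fst m, k * snd m)"

lemmas deg_defs = dadd_def dsub_def dle_def djoin_def dscale_def prod_eq_iff

locale two_graph_struct =
  fixes V :: "'v set" and P :: "'a set" and r s :: "'a \<Rightarrow> 'v"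
    and cmp :: "'a \<Rightarrow> 'a \<Rightarrow> 'a" and idt :: "'v \<Rightarrow> 'a" and d :: "'a \<Rightarrow> deg"
  assumes two_graph: "two_graph V P r s cmp idt d"
begin

abbreviation segment :: "'a \<Rightarrow> deg \<Rightarrow> deg \<Rightarrow> 'a" where
  "segment \<equiv> seg P r s cmp d"

lemma comp_in: "f \<in> P \<Longrightarrow> g \<in> P \<Longrightarrow> s f = r g \<Longrightarrow> cmp f g \<in> P"
  and range_comp: "f \<in> P \<Longrightarrow> g \<in> P \<Longrightarrow> s f = r g \<Longrightarrow> r (cmp f g) = r f"
  and source_comp: "f \<in> P \<Longrightarrow> g \<in> P \<Longrightarrow> s f = r g \<Longrightarrow> s (cmp f g) = s g"
  and degree_comp: "f \<in> P \<Longrightarrow> g \<in> P \<Longrightarrow> s f = r g \<Longrightarrow> d (cmp f g) = dadd (d f) (d g)"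
  and comp_assoc: "f \<in> P \<Longrightarrow> g \<in> P \<Longrightarrow> h \<in> P \<Longrightarrow> s f = r g \<Longrightarrow> s g = r h \<Longrightarrow>
    cmp (cmp f g) h = cmp f (cmp g h)"
  and range_in: "f \<in> P \<Longrightarrow> r f \<in> V"
  and idt_in: "v \<in> V \<Longrightarrow> idt v \<in> P"
  and range_idt: "v \<in> V \<Longrightarrow> r (idt v) = v"
  and source_idt: "v \<in> V \<Longrightarrow> s (idt v) = v"
  and degree_idt: "v \<in> V \<Longrightarrow> d (idt v) = (0, 0)"
  and comp_idt_left: "f \<in> P \<Longrightarrow> cmp (idt (r f)) f = f"
  and comp_idt_right: "f \<in> P \<Longrightarrow> cmp f (idt (s f)) = f"
  using two_graph unfolding two_graph_def by blast+

lemma factorization: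
  "f \<in> P \<Longrightarrow> d f = dadd m n \<Longrightarrow> \<exists>!p. fst p \<in> P \<and> snd p \<in> P \<and> s (fst p) = r (snd p) \<and>
     f = cmp (fst p) (snd p) \<and> d (fst p) = m \<and> d (snd p) = n"
  using two_graph unfolding two_graph_def by blast

lemma factorization_exists:
  assumes "f \<in> P" "d f = dadd m n"
  obtains g h where "g \<in> P" "h \<in> P" "s g = r h" "f = cmp g h" "d g = m" "d h = n"
  using factorization[OF assms] by blast

lemma factorization_unique:
  assumes "g \<in> P" "h \<in> P" "s g = r h" "g' \<in> P" "h' \<in> P" "s g' = r h'"
    and "cmp g h = cmp g' h'" "d g = d g'" "d h = d h'"
  shows "g = g'" "h = h'"
proof -
  have "d (cmp g h) = dadd (d g) (d h)"
    using assms by (simp add: degree_comp)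
  from factorization[OF comp_in[OF assms(1-3)] this] have "(g, h) = (g', h')"
    using assms by (elim ex1E) (metis fst_conv snd_conv)
  then show "g = g'" "h = h'" by simp_all
qed

lemma seg_eqI:
  assumes "f1 \<in> P" "g \<in> P" "f2 \<in> P" "s f1 = r g" "s g = r f2" "f = cmp (cmp f1 g) f2"
    and "d f1 = m" "d g = dsub n m"
  shows "segment f m n = g"
  unfolding seg_def
proof (rule the_equality)
  show "g \<in> P \<and> (\<exists>f1\<in>P. \<exists>f2\<in>P. s f1 = r g \<and> s g = r f2 \<and>
          f = cmp (cmp f1 g) f2 \<and> d f1 = m \<and> d g = dsub n m)"
    using assms by blast
next
  fix g' assume "g' \<in> P \<and> (\<exists>f1'\<in>P. \<exists>f2'\<in>P. s f1' = r g' \<and> s g' = r f2' \<and>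
          f = cmp (cmp f1' g') f2' \<and> d f1' = m \<and> d g' = dsub n m)"
  then obtain f1' f2' where g': "g' \<in> P" "f1' \<in> P" "f2' \<in> P" "s f1' = r g'" "s g' = r f2'"
      "f = cmp (cmp f1' g') f2'" "d f1' = m" "d g' = dsub n m"
    by blast
  have f: "f = cmp f1 (cmp g f2)" "f = cmp f1' (cmp g' f2')"
    using assms g' by (simp_all add: comp_assoc)
  have "d f = dadd m (dadd (d g) (d f2))"
    unfolding f(1) using assms by (simp add: degree_comp comp_in range_comp)
  moreover have "d f = dadd m (dadd (d g') (d f2'))"
    unfolding f(2) using g' by (simp add: degree_comp comp_in range_comp)
  ultimately have "d f2 = d f2'"
    using assms g' by (simp add: deg_defs)
  with assms g' f have "cmp g f2 = cmp g' f2'"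
    by (intro factorization_unique(2)[of f1 "cmp g f2" f1' "cmp g' f2'"])
      (simp_all add: comp_in range_comp degree_comp)
  with assms g' \<open>d f2 = d f2'\<close> show "g' = g"
    by (metis factorization_unique(1))
qed

lemma seg_decomposition:
  assumes "f \<in> P" "dle m n" "dle n (d f)"
  obtains f1 g f2 where "f1 \<in> P" "g \<in> P" "f2 \<in> P" "s f1 = r g" "s g = r f2"
    "f = cmp (cmp f1 g) f2" "d f1 = m" "d g = dsub n m" "d f2 = dsub (d f) n"
proof -
  have "d f = dadd m (dsub (d f) m)"
    using assms by (auto simp: deg_defs)
  then obtain f1 h where h: "f1 \<in> P" "h \<in> P" "s f1 = r h" "f = cmp f1 h" "d f1 = m"
      "d h = dsub (d f) m"
    by (rule factorization_exists[OF assms(1)])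
  have "d h = dadd (dsub n m) (dsub (d f) n)"
    using h(6) assms by (auto simp: deg_defs)
  then obtain g f2 where "g \<in> P" "f2 \<in> P" "s g = r f2" "h = cmp g f2" "d g = dsub n m"
      "d f2 = dsub (d f) n"
    by (rule factorization_exists[OF h(2)])
  with h that show ?thesis
    by (simp add: comp_assoc range_comp)
qed

lemma seg_seg:
  assumes "f \<in> P" "dle a b" "dle b (d f)" "dle x y" "dle y (dsub b a)"
  shows "segment (segment f a b) x y = segment f (dadd a x) (dadd a y)"
proof -
  obtain f1 g f2 where g: "f1 \<in> P" "g \<in> P" "f2 \<in> P" "s f1 = r g" "s g = r f2"
      "f = cmp (cmp f1 g) f2" "d f1 = a" "d g = dsub b a" "d f2 = dsub (d f) b"
    using assms(1-3) by (rule seg_decomposition)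
  then have seg_g: "segment f a b = g"
    by (blast intro: seg_eqI)
  obtain g1 h g2 where h: "g1 \<in> P" "h \<in> P" "g2 \<in> P" "s g1 = r h" "s h = r g2"
      "g = cmp (cmp g1 h) g2" "d g1 = x" "d h = dsub y x"
    using seg_decomposition[OF g(2) assms(4)] assms(5) g(8) by metis
  have "r g = r g1" "s g = s g2"
    using h by (simp_all add: comp_in range_comp source_comp)
  with g h have "segment f (dadd a x) (dadd a y) = h"
    by (intro seg_eqI[of "cmp f1 g1" h "cmp g2 f2"])
      (auto simp: comp_in range_comp source_comp degree_comp comp_assoc deg_defs)
  moreover have "segment g x y = h"
    using h by (blast intro: seg_eqI)
  ultimately show ?thesis
    using seg_g by simp
qed

lemma seg_comp_left:
  assumes "l \<in> P" "f \<in> P" "s l = r f" "dle x y" "dle y (d f)"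
  shows "segment (cmp l f) (dadd (d l) x) (dadd (d l) y) = segment f x y"
proof -
  obtain g1 h g2 where h: "g1 \<in> P" "h \<in> P" "g2 \<in> P" "s g1 = r h" "s h = r g2"
      "f = cmp (cmp g1 h) g2" "d g1 = x" "d h = dsub y x"
    using assms(2,4,5) by (rule seg_decomposition)
  have "r f = r g1"
    using h by (simp add: comp_in range_comp source_comp)
  with assms h have "segment (cmp l f) (dadd (d l) x) (dadd (d l) y) = h"
    by (intro seg_eqI[of "cmp l g1" h g2])
      (auto simp: comp_in range_comp source_comp degree_comp comp_assoc deg_defs)
  moreover have "segment f x y = h"
    using h by (blast intro: seg_eqI)
  ultimately show ?thesis
    by simp
qed

lemma seg_shift_of_periodic:
  assumes "f \<in> P" "dle (djoin m n) (d f)"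
    and periodic: "segment f m (dadd m t) = segment f n (dadd n t)"
    and t: "t = dsub (d f) (djoin m n)"
    and "dle x y" "dle y t"
  shows "segment f (dadd m x) (dadd m y) = segment f (dadd n x) (dadd n y)"
proof -
  have "segment (segment f m (dadd m t)) x y = segment f (dadd m x) (dadd m y)"
    using assms(1,2,4-6) by (intro seg_seg) (auto simp: deg_defs max_def)
  moreover have "segment (segment f n (dadd n t)) x y = segment f (dadd n x) (dadd n y)"
    using assms(1,2,4-6) by (intro seg_seg) (auto simp: deg_defs max_def)
  ultimately show ?thesis
    using periodic by simp
qed

lemma seg_shift_iterate:
  assumes "f \<in> P" "dle (djoin m n) (d f)"
    and periodic: "segment f m (dadd m t) = segment f n (dadd n t)"
    and t: "t = dsub (d f) (djoin m n)"
  shows "dle x y \<Longrightarrow> dle (dadd (dscale k (djoin m n)) y) t \<Longrightarrow>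
    segment f (dadd (dscale k m) x) (dadd (dscale k m) y)
    = segment f (dadd (dscale k n) x) (dadd (dscale k n) y)"
proof (induction k arbitrary: x y)
  case 0
  then show ?case
    by (simp add: deg_defs)
next
  case (Suc k x y)
  have k_le: "k * fst m \<le> k * max (fst m) (fst n)" "k * snd m \<le> k * max (snd m) (snd n)"
    by simp_all
  have "segment f (dadd (dscale (Suc k) m) x) (dadd (dscale (Suc k) m) y)
      = segment f (dadd m (dadd (dscale k m) x)) (dadd m (dadd (dscale k m) y))"
    by (simp add: deg_defs add.assoc)
  also have "\<dots> = segment f (dadd n (dadd (dscale k m) x)) (dadd n (dadd (dscale k m) y))"
    using Suc.prems by (intro seg_shift_of_periodic[OF assms]) (auto simp: deg_defs, insert k_le, linarith+)
  also have "\<dots> = segment f (dadd (dscale k m) (dadd n x)) (dadd (dscale k m) (dadd n y))"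
    by (simp add: deg_defs add.left_commute)
  also have "\<dots> = segment f (dadd (dscale k n) (dadd n x)) (dadd (dscale k n) (dadd n y))"
    using Suc.prems by (intro Suc.IH) (auto simp: deg_defs)
  also have "\<dots> = segment f (dadd (dscale (Suc k) n) x) (dadd (dscale (Suc k) n) y)"
    by (simp add: deg_defs add_ac)
  finally show ?case .
qed

end

locale two_graph_loops = two_graph_struct V P r s cmp idt d
  for V :: "'v set" and P :: "'a set" and r s cmp idt d +
  fixes u :: 'v
  assumes u_in: "u \<in> V"
begin

definition loop :: "'a \<Rightarrow> bool" where
  "loop g \<longleftrightarrow> g \<in> P \<and> r g = u \<and> s g = u"

definition loop_pow :: "'a \<Rightarrow> nat \<Rightarrow> 'a" where
  "loop_pow g k = (cmp g ^^ k) (idt u)"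

lemma loop_idt [simp]: "loop (idt u)"
  using u_in by (simp add: loop_def idt_in range_idt source_idt)

lemma loop_comp [simp]: "loop g \<Longrightarrow> loop h \<Longrightarrow> loop (cmp g h)"
  by (simp add: loop_def comp_in range_comp source_comp)

lemma loop_assoc: "loop f \<Longrightarrow> loop g \<Longrightarrow> loop h \<Longrightarrow> cmp (cmp f g) h = cmp f (cmp g h)"
  by (simp add: loop_def comp_assoc)

lemma loop_idt_left [simp]: "loop g \<Longrightarrow> cmp (idt u) g = g"
  unfolding loop_def using comp_idt_left by force

lemma loop_idt_right [simp]: "loop g \<Longrightarrow> cmp g (idt u) = g"
  unfolding loop_def using comp_idt_right by force

lemma degree_loop_comp [simp]: "loop g \<Longrightarrow> loop h \<Longrightarrow> d (cmp g h) = dadd (d g) (d h)"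
  by (simp add: loop_def degree_comp)

lemma loop_pow_0 [simp]: "loop_pow g 0 = idt u"
  by (simp add: loop_pow_def)

lemma loop_pow_Suc: "loop_pow g (Suc k) = cmp g (loop_pow g k)"
  by (simp add: loop_pow_def)

lemma loop_loop_pow [simp]: "loop g \<Longrightarrow> loop (loop_pow g k)"
  by (induction k) (simp_all add: loop_pow_Suc)

lemma loop_pow_add: "loop g \<Longrightarrow> loop_pow g (i + j) = cmp (loop_pow g i) (loop_pow g j)"
  by (induction i) (simp_all add: loop_pow_Suc loop_assoc)

lemma degree_loop_pow: "loop g \<Longrightarrow> d (loop_pow g k) = (k * fst (d g), k * snd (d g))"
  by (induction k) (simp_all add: loop_pow_Suc degree_idt u_in deg_defs)

lemma loop_pow_intertwine:
  assumes "loop x" "loop y" "loop z" "cmp x y = cmp y z"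
  shows "cmp (loop_pow x k) y = cmp y (loop_pow z k)"
proof (induction k)
  case 0
  with assms show ?case
    by simp
next
  case (Suc k)
  have "cmp (loop_pow x (Suc k)) y = cmp x (cmp (loop_pow x k) y)"
    using assms by (simp add: loop_pow_Suc loop_assoc)
  also have "\<dots> = cmp (cmp x y) (loop_pow z k)"
    using assms(1-3) by (simp add: Suc.IH loop_assoc)
  also have "\<dots> = cmp (cmp y z) (loop_pow z k)"
    by (simp only: assms(4))
  also have "\<dots> = cmp y (loop_pow z (Suc k))"
    using assms by (simp add: loop_assoc loop_pow_Suc)
  finally show ?case .
qed

lemma loop_pow_commute:
  assumes "loop x" "loop y" "cmp x y = cmp y x"
  shows "cmp (loop_pow x k) (loop_pow y j) = cmp (loop_pow y j) (loop_pow x k)"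
proof -
  have "cmp (loop_pow x k) y = cmp y (loop_pow x k)"
    using assms by (intro loop_pow_intertwine)
  then show ?thesis
    using assms by (intro loop_pow_intertwine[symmetric]) simp_all
qed

lemma commute_comp:
  assumes "loop c" "loop x" "loop y" "cmp c x = cmp x c" "cmp c y = cmp y c"
  shows "cmp c (cmp x y) = cmp (cmp x y) c"
  using assms by (simp flip: loop_assoc) (simp add: loop_assoc)

lemma seg_loop_comp:
  assumes "loop f" "loop g" "loop h"
  shows "segment (cmp f (cmp g h)) (d f) (dadd (d f) (d g)) = g"
  using assms by (intro seg_eqI[of f g h]) (auto simp: loop_def comp_assoc deg_defs)

end

locale two_graph_quartet = two_graph_struct V P r s cmp idt d
  for V :: "'v set" and P :: "'a set" and r s cmp idt d +
  fixes a b :: nat and u :: 'v and \<alpha>1 \<alpha>2 \<beta>1 \<beta>2 :: 'a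
  assumes quartet: "aperiodic_quartet P r s cmp d a b u \<alpha>1 \<alpha>2 \<beta>1 \<beta>2"

sublocale two_graph_quartet \<subseteq> two_graph_loops
  using quartet by unfold_locales (auto simp: aperiodic_quartet_def paths_between_def dest: range_in)

context two_graph_quartet
begin

lemma quartet_loops [simp]: "loop \<alpha>1" "loop \<alpha>2" "loop \<beta>1" "loop \<beta>2"
  and quartet_degrees [simp]: "d \<alpha>1 = (a, 0)" "d \<alpha>2 = (a, 0)" "d \<beta>1 = (0, b)" "d \<beta>2 = (0, b)"
  and quartet_commute: "cmp \<beta>2 \<alpha>1 = cmp \<alpha>1 \<beta>2" "cmp \<beta>2 \<alpha>2 = cmp \<alpha>2 \<beta>2"
    "cmp \<beta>1 \<alpha>2 = cmp \<alpha>1 \<beta>1"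
  and quartet_pos: "0 < a" "0 < b"
  and quartet_alpha_neq: "\<alpha>1 \<noteq> \<alpha>2"
  using quartet by (simp_all add: aperiodic_quartet_def paths_between_def loop_def)

definition tile :: "'a \<Rightarrow> nat \<Rightarrow> nat \<Rightarrow> 'a" where
  "tile \<mu> i j = segment \<mu> (a * i, b * j) (a * i + a, b * j)"

lemma tile_loop_comp:
  assumes "loop f" "loop g" "loop h" "d f = (a * i, b * j)" "d g = (a, 0)"
  shows "tile (cmp f (cmp g h)) i j = g"
  using seg_loop_comp[OF assms(1-3)] assms(4,5) by (simp add: tile_def)

lemma tile_row_word:
  assumes "i0 \<le> i" "j0 \<le> J"
  shows "tile (cmp (loop_pow \<alpha>1 i) (cmp \<alpha>2 (cmp (loop_pow \<alpha>1 R) (loop_pow \<beta>2 J)))) i0 j0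
    = (if i0 < i then \<alpha>1 else \<alpha>2)"
proof -
  define X where "X = (if i0 < i then \<alpha>1 else \<alpha>2)"
  define W' where "W' = (if i0 < i then cmp (loop_pow \<alpha>1 (i - i0 - 1)) (cmp \<alpha>2 (loop_pow \<alpha>1 R))
    else loop_pow \<alpha>1 R)"
  define W where "W = cmp (loop_pow \<alpha>1 (i - i0)) (cmp \<alpha>2 (loop_pow \<alpha>1 R))"
  have loops: "loop X" "loop W'" "loop W"
    by (simp_all add: X_def W'_def W_def)
  have W_split: "W = cmp X W'"
  proof (cases "i0 < i")
    case True
    then have "loop_pow \<alpha>1 (i - i0) = cmp \<alpha>1 (loop_pow \<alpha>1 (i - i0 - 1))"
      by (metis Suc_diff_Suc diff_Suc_1 loop_pow_Suc)
    with True show ?thesis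
      by (simp add: W_def X_def W'_def loop_assoc)
  next
    case False
    with assms show ?thesis
      by (simp add: W_def X_def W'_def)
  qed
  \<comment> \<open>\<open>\<beta>\<^sub>2\<^sup>j\<^sup>0\<close> moves left past the \<open>\<alpha>\<close>-word, so row \<open>j0\<close> of the loop reads that word.\<close>
  have W_commute: "cmp (loop_pow \<beta>2 j0) W = cmp W (loop_pow \<beta>2 j0)"
    unfolding W_def using quartet_commute
    by (intro commute_comp loop_pow_commute loop_pow_intertwine) (simp_all add: loop_pow_commute)
  have "loop_pow \<alpha>1 i = cmp (loop_pow \<alpha>1 i0) (loop_pow \<alpha>1 (i - i0))"
    "loop_pow \<beta>2 J = cmp (loop_pow \<beta>2 j0) (loop_pow \<beta>2 (J - j0))"
    using assms by (simp_all flip: loop_pow_add)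
  then have "cmp (loop_pow \<alpha>1 i) (cmp \<alpha>2 (cmp (loop_pow \<alpha>1 R) (loop_pow \<beta>2 J)))
      = cmp (loop_pow \<alpha>1 i0) (cmp (cmp W (loop_pow \<beta>2 j0)) (loop_pow \<beta>2 (J - j0)))"
    by (simp add: W_def loop_assoc)
  also have "\<dots> = cmp (loop_pow \<alpha>1 i0) (cmp (cmp (loop_pow \<beta>2 j0) W) (loop_pow \<beta>2 (J - j0)))"
    by (simp only: W_commute)
  also have "\<dots> = cmp (cmp (loop_pow \<alpha>1 i0) (loop_pow \<beta>2 j0)) (cmp X (cmp W' (loop_pow \<beta>2 (J - j0))))"
    using loops by (simp add: W_split loop_assoc)
  also have "tile \<dots> i0 j0 = X"
    using loops by (intro tile_loop_comp) (simp_all add: X_def degree_loop_pow)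
  finally show ?thesis
    by (simp add: X_def)
qed

lemma column_word_split:
  assumes "i0 \<le> I"
  shows "cmp (loop_pow \<alpha>1 I) (cmp (loop_pow \<beta>2 j) (cmp \<beta>1 (loop_pow \<beta>2 R)))
    = cmp (cmp (loop_pow \<alpha>1 i0) (loop_pow \<beta>2 j)) (cmp (cmp (loop_pow \<alpha>1 (I - i0)) \<beta>1) (loop_pow \<beta>2 R))"
proof -
  define A where "A = loop_pow \<alpha>1 (I - i0)"
  have A_\<beta>2: "cmp A (loop_pow \<beta>2 j) = cmp (loop_pow \<beta>2 j) A"
    using quartet_commute by (simp add: A_def loop_pow_commute)
  have "loop_pow \<alpha>1 I = cmp (loop_pow \<alpha>1 i0) A"
    using assms by (simp add: A_def flip: loop_pow_add)
  then have "cmp (loop_pow \<alpha>1 I) (cmp (loop_pow \<beta>2 j) (cmp \<beta>1 (loop_pow \<beta>2 R)))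
      = cmp (loop_pow \<alpha>1 i0) (cmp (cmp A (loop_pow \<beta>2 j)) (cmp \<beta>1 (loop_pow \<beta>2 R)))"
    by (simp add: A_def loop_assoc)
  also have "\<dots> = cmp (cmp (loop_pow \<alpha>1 i0) (loop_pow \<beta>2 j)) (cmp (cmp A \<beta>1) (loop_pow \<beta>2 R))"
    by (simp only: A_\<beta>2) (simp add: A_def loop_assoc)
  finally show ?thesis
    by (simp only: A_def)
qed

lemma tile_column_switch:
  assumes "i0 < I"
  shows "tile (cmp (loop_pow \<alpha>1 I) (cmp (loop_pow \<beta>2 j) (cmp \<beta>1 (loop_pow \<beta>2 R)))) i0 j = \<alpha>1"
    and "c \<le> R \<Longrightarrow>
      tile (cmp (loop_pow \<alpha>1 I) (cmp (loop_pow \<beta>2 j) (cmp \<beta>1 (loop_pow \<beta>2 R)))) i0 (j + 1 + c) = \<alpha>2"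
proof -
  define k where "k = I - i0 - 1"
  have I: "I - i0 = Suc k"
    using assms by (simp add: k_def)
  note \<mu> = column_word_split[of i0 I j R, unfolded I, OF less_imp_le[OF assms]]
  have "tile (cmp (cmp (loop_pow \<alpha>1 i0) (loop_pow \<beta>2 j))
      (cmp \<alpha>1 (cmp (loop_pow \<alpha>1 k) (cmp \<beta>1 (loop_pow \<beta>2 R))))) i0 j = \<alpha>1"
    by (rule tile_loop_comp) (simp_all add: degree_loop_pow)
  then show "tile (cmp (loop_pow \<alpha>1 I) (cmp (loop_pow \<beta>2 j) (cmp \<beta>1 (loop_pow \<beta>2 R)))) i0 j = \<alpha>1"
    by (simp add: \<mu> loop_pow_Suc loop_assoc)
  assume "c \<le> R"
  \<comment> \<open>Passing \<open>\<beta>\<^sub>1\<close> turns \<open>\<alpha>\<^sub>1\<close>'s into \<open>\<alpha>\<^sub>2\<close>'s, so column \<open>i0\<close> reads \<open>\<alpha>\<^sub>2\<close> above row \<open>j\<close>.\<close>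
  define B where "B = loop_pow \<alpha>2 (Suc k)"
  have A_\<beta>1: "cmp (loop_pow \<alpha>1 (Suc k)) \<beta>1 = cmp \<beta>1 B"
    using quartet_commute by (simp add: B_def loop_pow_intertwine)
  have B_\<beta>2: "cmp B (loop_pow \<beta>2 c) = cmp (loop_pow \<beta>2 c) B"
    using quartet_commute by (simp add: B_def loop_pow_commute)
  have "loop_pow \<beta>2 R = cmp (loop_pow \<beta>2 c) (loop_pow \<beta>2 (R - c))"
    using \<open>c \<le> R\<close> by (simp flip: loop_pow_add)
  then have "cmp (cmp (loop_pow \<alpha>1 (Suc k)) \<beta>1) (loop_pow \<beta>2 R)
      = cmp \<beta>1 (cmp (cmp B (loop_pow \<beta>2 c)) (loop_pow \<beta>2 (R - c)))"
    by (simp add: A_\<beta>1 B_def loop_assoc)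
  also have "\<dots> = cmp (cmp \<beta>1 (loop_pow \<beta>2 c)) (cmp \<alpha>2 (cmp (loop_pow \<alpha>2 k) (loop_pow \<beta>2 (R - c))))"
    by (simp only: B_\<beta>2) (simp add: B_def loop_pow_Suc loop_assoc)
  finally have "cmp (loop_pow \<alpha>1 I) (cmp (loop_pow \<beta>2 j) (cmp \<beta>1 (loop_pow \<beta>2 R)))
      = cmp (cmp (cmp (loop_pow \<alpha>1 i0) (loop_pow \<beta>2 j)) (cmp \<beta>1 (loop_pow \<beta>2 c)))
          (cmp \<alpha>2 (cmp (loop_pow \<alpha>2 k) (loop_pow \<beta>2 (R - c))))"
    unfolding \<mu> by (simp add: loop_assoc)
  also have "tile \<dots> i0 (j + 1 + c) = \<alpha>2"
    by (rule tile_loop_comp) (simp_all add: degree_loop_pow algebra_simps)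
  finally show "tile (cmp (loop_pow \<alpha>1 I) (cmp (loop_pow \<beta>2 j) (cmp \<beta>1 (loop_pow \<beta>2 R)))) i0 (j + 1 + c) = \<alpha>2" .
qed

lemma le_scaled_by_quartet: "x \<le> a * x" "x \<le> b * x"
  using quartet_pos by simp_all

lemma exists_loop_separating_columns:
  assumes "i1 \<noteq> i2"
  obtains \<mu> where "loop \<mu>" "dle D (d \<mu>)" "tile \<mu> i1 j1 \<noteq> tile \<mu> i2 j2"
proof
  define i where "i = max i1 i2"
  define \<mu> where "\<mu> = cmp (loop_pow \<alpha>1 i) (cmp \<alpha>2 (cmp (loop_pow \<alpha>1 (fst D)) (loop_pow \<beta>2 (snd D + j1 + j2))))"
  show "loop \<mu>"
    by (simp add: \<mu>_def)
  have "d \<mu> = (a * i + a + a * fst D, b * snd D + b * j1 + b * j2)"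
    by (simp add: \<mu>_def degree_loop_pow algebra_simps)
  with le_scaled_by_quartet[of "fst D"] le_scaled_by_quartet[of "snd D"] show "dle D (d \<mu>)"
    unfolding dle_def by (simp only: fst_conv snd_conv) linarith
  have "tile \<mu> i1 j1 = (if i1 < i then \<alpha>1 else \<alpha>2)" "tile \<mu> i2 j2 = (if i2 < i then \<alpha>1 else \<alpha>2)"
    unfolding \<mu>_def by (simp_all add: tile_row_word i_def)
  with assms quartet_alpha_neq show "tile \<mu> i1 j1 \<noteq> tile \<mu> i2 j2"
    by (auto simp: i_def)
qed

lemma exists_loop_separating_rows:
  assumes "j1 < j2"
  obtains \<mu> where "loop \<mu>" "dle D (d \<mu>)" "tile \<mu> i j1 \<noteq> tile \<mu> i j2"
proof
  define I where "I = i + 1 + fst D"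
  define c where "c = j2 - j1 - 1"
  define \<mu> where "\<mu> = cmp (loop_pow \<alpha>1 I) (cmp (loop_pow \<beta>2 j1) (cmp \<beta>1 (loop_pow \<beta>2 (snd D + c))))"
  show "loop \<mu>"
    by (simp add: \<mu>_def)
  have "d \<mu> = (a * I, b * j1 + b + b * snd D + b * c)"
    by (simp add: \<mu>_def degree_loop_pow algebra_simps)
  moreover have "fst D \<le> I"
    by (simp add: I_def)
  ultimately show "dle D (d \<mu>)"
    using le_scaled_by_quartet[of I] le_scaled_by_quartet[of "snd D"]
    unfolding dle_def by (simp only: fst_conv snd_conv) linarith
  have "tile \<mu> i j1 = \<alpha>1" "tile \<mu> i (j1 + 1 + c) = \<alpha>2"
    unfolding \<mu>_def by (rule tile_column_switch; simp add: I_def)+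
  moreover have "j2 = j1 + 1 + c"
    using assms by (simp add: c_def)
  ultimately show "tile \<mu> i j1 \<noteq> tile \<mu> i j2"
    using quartet_alpha_neq by simp
qed

lemma exists_loop_separating_tiles:
  assumes "(i1, j1) \<noteq> (i2, j2)"
  obtains \<mu> where "loop \<mu>" "dle D (d \<mu>)" "tile \<mu> i1 j1 \<noteq> tile \<mu> i2 j2"
proof (cases "i1 = i2")
  case True
  with assms have "j1 < j2 \<or> j2 < j1"
    by auto
  with True that show ?thesis
    by (metis exists_loop_separating_rows)
next
  case False
  with that show ?thesis
    by (metis exists_loop_separating_columns)
qed

lemma seg_comp_left_scaled_tile:
  assumes "l \<in> P" "s l = u" "loop \<mu>" "dle (dadd (dscale (Suc (a * b)) D) (a, 0)) (d \<mu>)" "dle x D"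
  shows "segment (cmp l \<mu>) (dadd (dscale (a * b) x) (d l)) (dadd (dscale (a * b) x) (dadd (d l) (a, 0)))
    = tile \<mu> (b * fst x) (a * snd x)"
proof -
  have "a * (b * fst x) \<le> a * (b * fst D)" "a * (b * snd x) \<le> a * (b * snd D)"
    using assms(5) by (intro mult_le_mono2; simp add: dle_def)+
  moreover have "a + (fst D + a * (b * fst D)) \<le> fst (d \<mu>)" "snd D + a * (b * snd D) \<le> snd (d \<mu>)"
    using assms(4) by (simp_all add: deg_defs algebra_simps)
  ultimately have "a * (b * fst x) + a \<le> fst (d \<mu>)" "b * (a * snd x) \<le> snd (d \<mu>)"
    unfolding mult.left_commute[of b a] by linarith+
  then have "segment (cmp l \<mu>) (dadd (d l) (a * (b * fst x), b * (a * snd x)))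
      (dadd (d l) (a * (b * fst x) + a, b * (a * snd x))) = tile \<mu> (b * fst x) (a * snd x)"
    using assms(1-3) unfolding tile_def loop_def by (intro seg_comp_left) (auto simp: dle_def)
  then show ?thesis
    by (simp add: deg_defs algebra_simps)
qed

lemma no_local_periodicity_at_quartet_reachable:
  assumes l: "l \<in> P" "s l = u"
  shows "no_local_periodicity_at P r s cmp d (r l)"
  unfolding no_local_periodicity_at_def
proof (intro allI impI)
  fix m n :: deg
  assume "m \<noteq> n"
  define D where "D = djoin m n"
  define K where "K = a * b"
  \<comment> \<open>Degree \<open>K x\<close> is the corner of the grid cell \<open>(b x\<^sub>1, a x\<^sub>2)\<close>.\<close>
  have "(b * fst m, a * snd m) \<noteq> (b * fst n, a * snd n)"
    using \<open>m \<noteq> n\<close> quartet_pos by (simp add: prod_eq_iff)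
  then obtain \<mu> where \<mu>: "loop \<mu>" "dle (dadd (dscale (Suc K) D) (a, 0)) (d \<mu>)"
    and separated: "tile \<mu> (b * fst m) (a * snd m) \<noteq> tile \<mu> (b * fst n) (a * snd n)"
    by (rule exists_loop_separating_tiles)
  define f where "f = cmp l \<mu>"
  have f: "f \<in> P" "r f = r l" "d f = dadd (d l) (d \<mu>)"
    using l \<mu>(1) by (simp_all add: f_def loop_def comp_in range_comp degree_comp)
  have "dle D (d f)"
    using \<mu>(2) f(3) by (simp add: deg_defs)
  moreover have "segment f m (dadd m (dsub (d f) D)) \<noteq> segment f n (dadd n (dsub (d f) D))"
  proof
    assume periodic: "segment f m (dadd m (dsub (d f) D)) = segment f n (dadd n (dsub (d f) D))"
    have tile_at: "segment f (dadd (dscale K x) (d l)) (dadd (dscale K x) (dadd (d l) (a, 0)))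
        = tile \<mu> (b * fst x) (a * snd x)" if "dle x D" for x
      unfolding f_def K_def using l \<mu> that by (intro seg_comp_left_scaled_tile) (simp_all add: K_def)
    have "segment f (dadd (dscale K m) (d l)) (dadd (dscale K m) (dadd (d l) (a, 0)))
        = segment f (dadd (dscale K n) (d l)) (dadd (dscale K n) (dadd (d l) (a, 0)))"
      using \<mu>(2) f(3) by (intro seg_shift_iterate[OF f(1) _ periodic[unfolded D_def]]) (auto simp: deg_defs D_def)
    then show False
      using separated tile_at[of m] tile_at[of n] by (simp add: D_def dle_def djoin_def)
  qed
  ultimately show "\<exists>f\<in>P. r f = r l \<and> dle (djoin m n) (d f) \<and>
      segment f m (dadd m (dsub (d f) (djoin m n))) \<noteq> segment f n (dadd n (dsub (d f) (djoin m n)))"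
    using f by (auto simp: D_def)
qed

end

theorem proposition3p7:
  fixes V :: "'v set" and P :: "'a set" and r s :: "'a \<Rightarrow> 'v"
    and cmp :: "'a \<Rightarrow> 'a \<Rightarrow> 'a" and idt :: "'v \<Rightarrow> 'a" and d :: "'a \<Rightarrow> deg"
  assumes "two_graph V P r s cmp idt d"
    and "row_finite V P r d"
    and "no_sources V P r d"
    and "\<forall>v\<in>V. \<exists>u\<in>V. (\<exists>f\<in>P. r f = v \<and> s f = u) \<and> has_aperiodic_quartet_at P r s cmp d u"
  shows "aperiodic V P r s cmp d"
  unfolding aperiodic_def
proof
  fix v
  assume "v \<in> V"
  then obtain u l where l: "l \<in> P" "r l = v" "s l = u" and "has_aperiodic_quartet_at P r s cmp d u"
    using assms(4) by blast
  then obtain a b \<alpha>1 \<alpha>2 \<beta>1 \<beta>2 where "aperiodic_quartet P r s cmp d a b u \<alpha>1 \<alpha>2 \<beta>1 \<beta>2"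
    unfolding has_aperiodic_quartet_at_def by blast
  with assms(1) interpret two_graph_quartet V P r s cmp idt d a b u \<alpha>1 \<alpha>2 \<beta>1 \<beta>2
    by (simp add: two_graph_quartet_def two_graph_struct_def two_graph_quartet_axioms_def)
  show "no_local_periodicity_at P r s cmp d v"
    using no_local_periodicity_at_quartet_reachable[OF l(1,3)] l(2) by simp
qed

end
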